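(* For $n\ge2$ and all $P,Q\in\Gamma_n$, $D_{\Psi J}(P\|Q)\le \frac43 D_{\Psi T}(P\|Q)$.
   Context: $\Gamma_n=\{P=(p_1,\dots,p_n): p_i>0,\ \sum p_i=1\}$. $\Psi(P\|Q)=\sum_{i=1}^n\frac{(p_i-q_i)^2(p_i+q_i)}{p_iq_i}$; $J(P\|Q)=\sum_{i=1}^n(p_i-q_i)\ln\frac{p_i}{q_i}$; $T(P\|Q)=\sum_{i=1}^n\frac{p_i+q_i}{2}\ln\frac{p_i+q_i}{2\sqrt{p_iq_i}}$. $D_{\Psi J}=\frac1{16}\Psi-\frac18J$, $D_{\Psi T}=\frac1{16}\Psi-T$. *)

theory Defs
  imports Complex_Main
begin

definition Gamma :: "nat \<Rightarrow> (nat \<Rightarrow> real) set" where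
  "Gamma n = {p. (\<forall>i\<in>{1..n}. p i > 0) \<and> (\<Sum>i=1..n. p i) = 1}"

definition Psi :: "nat \<Rightarrow> (nat \<Rightarrow> real) \<Rightarrow> (nat \<Rightarrow> real) \<Rightarrow> real" where
  "Psi n p q = (\<Sum>i=1..n. (p i - q i)^2 * (p i + q i) / (p i * q i))"

definition Jdiv :: "nat \<Rightarrow> (nat \<Rightarrow> real) \<Rightarrow> (nat \<Rightarrow> real) \<Rightarrow> real" where
  "Jdiv n p q = (\<Sum>i=1..n. (p i - q i) * ln (p i / q i))"

definition Tdiv :: "nat \<Rightarrow> (nat \<Rightarrow> real) \<Rightarrow> (nat \<Rightarrow> real) \<Rightarrow> real" where
  "Tdiv n p q = (\<Sum>i=1..n. (p i + q i) / 2 * ln ((p i + q i) / (2 * sqrt (p i * q i))))"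

definition D_PsiJ :: "nat \<Rightarrow> (nat \<Rightarrow> real) \<Rightarrow> (nat \<Rightarrow> real) \<Rightarrow> real" where
  "D_PsiJ n p q = Psi n p q / 16 - Jdiv n p q / 8"

definition D_PsiT :: "nat \<Rightarrow> (nat \<Rightarrow> real) \<Rightarrow> (nat \<Rightarrow> real) \<Rightarrow> real" where
  "D_PsiT n p q = Psi n p q / 16 - Tdiv n p q"

end

theory Submission
  imports Defs
begin

text \<open>Multiplied by 48, the claim reads \<open>\<Psi> + 6 J - 64 T \<ge> 0\<close>, and this holds term by term. Writing \<open>p = x\<^sup>2 q\<close>,
  the summand for \<open>(p, q)\<close> is \<open>q (x\<^sup>2 + 1) K x\<close> with \<open>K = reduced_gap\<close> and \<open>K 1 = 0\<close>.
  Its derivative is \<open>4 x M x / (x\<^sup>2 + 1)\<^sup>2\<close>, where \<open>M = reduced_gap_deriv_factor\<close> has \<open>M 1 = 0\<close>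
  and \<open>M' x = 2 (x - 1/x)\<^sup>4 / x \<ge> 0\<close>; so \<open>K\<close> decreases on \<open>(0, 1]\<close>, increases on \<open>[1, \<infinity>)\<close>,
  and is therefore nonnegative.\<close>

lemma min_at_deriv_sign_change:
  fixes f f' :: "real \<Rightarrow> real"
  assumes deriv: "\<And>y. a < y \<Longrightarrow> (f has_real_derivative f' y) (at y)"
    and decreasing: "\<And>y. a < y \<Longrightarrow> y \<le> c \<Longrightarrow> f' y \<le> 0"
    and increasing: "\<And>y. c \<le> y \<Longrightarrow> 0 \<le> f' y"
    and "a < c" "a < x"
  shows "f c \<le> f x"
proof (cases "c \<le> x")
  case True
  show ?thesis
    by (rule deriv_nonneg_imp_mono[OF deriv increasing]) (use True \<open>a < c\<close> in auto)
next
  case False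
  show ?thesis
    by (rule deriv_nonpos_imp_antimono[OF deriv decreasing]) (use False \<open>a < x\<close> in auto)
qed

definition divergence_gap :: "real \<Rightarrow> real \<Rightarrow> real" where
  "divergence_gap p q = (p - q)\<^sup>2 * (p + q) / (p * q) + 6 * ((p - q) * ln (p / q))
     - 64 * ((p + q) / 2 * ln ((p + q) / (2 * sqrt (p * q))))"

lemma sum_divergence_gap:
  "(\<Sum>i=1..n. divergence_gap (P i) (Q i)) = Psi n P Q + 6 * Jdiv n P Q - 64 * Tdiv n P Q"
  unfolding divergence_gap_def Psi_def Jdiv_def Tdiv_def
  by (simp add: sum.distrib sum_subtractf sum_distrib_left)

definition reduced_gap :: "real \<Rightarrow> real" where
  "reduced_gap x = (x\<^sup>2 - 1)\<^sup>2 / x\<^sup>2 + 12 * (x\<^sup>2 - 1) / (x\<^sup>2 + 1) * ln x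
     - 32 * ln ((x\<^sup>2 + 1) / (2 * x))"

definition reduced_gap_deriv_factor :: "real \<Rightarrow> real" where
  "reduced_gap_deriv_factor x =
     (x - 1/x) * (x + 1/x)^3 / 2 - 5 * (x - 1/x) * (x + 1/x) + 12 * ln x"

lemma divergence_gap_eq_reduced_gap:
  assumes x: "x > 0" and q: "q > 0"
  shows "divergence_gap (x\<^sup>2 * q) q = q * (x\<^sup>2 + 1) * reduced_gap x"
proof -
  have "sqrt (x\<^sup>2 * q * q) = x * q"
    using x q by (simp add: real_sqrt_mult power2_eq_square)
  then have ratio: "(x\<^sup>2 * q + q) / (2 * sqrt (x\<^sup>2 * q * q)) = (x\<^sup>2 + 1) / (2 * x)"
    using x q by (simp add: field_simps)
  have log_ratio: "ln (x\<^sup>2 * q / q) = 2 * ln x"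
    using x q by (simp add: ln_realpow)
  have "x\<^sup>2 + 1 \<noteq> 0"
    using zero_le_power2[of x] by linarith
  then show ?thesis
    using x q unfolding divergence_gap_def reduced_gap_def ratio log_ratio
    by (simp add: divide_simps) (simp add: algebra_simps power2_eq_square)
qed

lemma reduced_gap_deriv_factor_deriv:
  "x > 0 \<Longrightarrow> (reduced_gap_deriv_factor has_real_derivative 2 * (x - 1/x)^4 / x) (at x)"
  unfolding reduced_gap_deriv_factor_def
  apply (rule derivative_eq_intros refl | simp)+
  apply (simp add: field_simps power2_eq_square power3_eq_cube power4_eq_xxxx)
  done

lemma reduced_gap_deriv:
  assumes x: "x > 0"
  shows "(reduced_gap has_real_derivative
           4 * x * reduced_gap_deriv_factor x / (x\<^sup>2 + 1)\<^sup>2) (at x)"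
proof -
  have p: "x\<^sup>2 + 1 > 0"
    using zero_le_power2[of x] by linarith
  have nz: "x\<^sup>2 + 1 \<noteq> 0" "1 + x\<^sup>2 \<noteq> 0" "1 + x * x \<noteq> 0" "(x\<^sup>2 + 1) / (2 * x) > 0"
    using x p unfolding power2_eq_square by auto
  show ?thesis
    unfolding reduced_gap_def reduced_gap_deriv_factor_def
    apply (rule derivative_eq_intros DERIV_ident refl | use x nz in \<open>simp; fail\<close>)+
    using x nz apply (simp add: divide_simps)
    apply (simp add: algebra_simps power2_eq_square power3_eq_cube power4_eq_xxxx)
    done
qed

lemma reduced_gap_deriv_factor_nonpos: "0 < x \<Longrightarrow> x \<le> 1 \<Longrightarrow> reduced_gap_deriv_factor x \<le> 0"
  using deriv_nonneg_imp_mono[OF reduced_gap_deriv_factor_deriv, of x 1]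
  by (simp add: reduced_gap_deriv_factor_def)

lemma reduced_gap_deriv_factor_nonneg: "1 \<le> x \<Longrightarrow> 0 \<le> reduced_gap_deriv_factor x"
  using deriv_nonneg_imp_mono[OF reduced_gap_deriv_factor_deriv, of 1 x]
  by (simp add: reduced_gap_deriv_factor_def)

lemma reduced_gap_nonneg:
  assumes "x > 0"
  shows "reduced_gap x \<ge> 0"
proof -
  have "reduced_gap 1 \<le> reduced_gap x"
  proof (rule min_at_deriv_sign_change[OF reduced_gap_deriv])
    show "4 * y * reduced_gap_deriv_factor y / (y\<^sup>2 + 1)\<^sup>2 \<le> 0" if "0 < y" "y \<le> 1" for y
      using reduced_gap_deriv_factor_nonpos[OF that] that
      by (simp add: divide_le_0_iff mult_nonneg_nonpos)
    show "0 \<le> 4 * y * reduced_gap_deriv_factor y / (y\<^sup>2 + 1)\<^sup>2" if "1 \<le> y" for y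
      using reduced_gap_deriv_factor_nonneg[OF that] that by simp
  qed (use assms in auto)
  then show ?thesis
    by (simp add: reduced_gap_def)
qed

lemma divergence_gap_nonneg:
  assumes p: "p > 0" and q: "q > 0"
  shows "0 \<le> divergence_gap p q"
proof -
  define x where "x = sqrt (p / q)"
  have x: "x > 0" and p_eq: "p = x\<^sup>2 * q"
    using p q by (simp_all add: x_def)
  show ?thesis
    unfolding p_eq divergence_gap_eq_reduced_gap[OF x q]
    using reduced_gap_nonneg[OF x] q by simp
qed

theorem proposition5p13:
  fixes n :: nat and P Q :: "nat \<Rightarrow> real"
  assumes "n \<ge> 2" and "P \<in> Gamma n" and "Q \<in> Gamma n"
  shows "D_PsiJ n P Q \<le> 4 / 3 * D_PsiT n P Q"
proof -
  have "0 \<le> (\<Sum>i=1..n. divergence_gap (P i) (Q i))"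
    using assms(2,3) by (intro sum_nonneg divergence_gap_nonneg) (auto simp: Gamma_def)
  then have "0 \<le> Psi n P Q + 6 * Jdiv n P Q - 64 * Tdiv n P Q"
    by (simp only: sum_divergence_gap)
  then show ?thesis
    unfolding D_PsiJ_def D_PsiT_def by simp
qed

end
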